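(* Let $m\ge2$, $K$ an algebraic number field, $a(z)\in K[z]$ monic of degree $m$, $b(z)\in K[z]$ of degree $\le m-1$ with $z^{m-1}$-coefficient $b_{m-1}$, with $a(z)=\prod_{i=1}^m(z-\alpha_i)$, $\alpha_i\in K$ pairwise distinct, $s_i:=b(\alpha_i)/a'(\alpha_i)\in\mathbb{Q}\setminus\mathbb{Z}_{\le-1}$, $b_{m-1}\notin\mathbb{Z}_{<-1}$. Let $v$ be a non-Archimedean place of $K$ and $n$ a positive integer. Then \[\log\max_{0\le\ell\le m}\{\|P_{n,\ell}\|_v\}\le\sum_{i=1}^m\bigl(\log|\mu_n(s_i)|_v^{-1}+n\,\mathrm{h}_v(\alpha_i)\bigr).\]
   Context: $P_{n,\ell}(z)=\frac1{n!}(\frac{d}{dz}+\frac{b(z)}{a(z)})^n(a(z)^nz^\ell)$ (operator applied $n$ times; a polynomial). For $R=\sum_kr_kz^k$, $\|R\|_v=\max_k|r_k|_v$. Absolute values normalized: $|p|_v=p^{-[K_v:\mathbb{Q}_p]/[K:\mathbb{Q}]}$ for $v\mid p$; $\mathrm{h}_v(\alpha)=\log\max\{1,|\alpha|_v\}$. For $s\in\mathbb{Q}$, $\mu_n(s)=\mathrm{den}(s)^n\prod_{q\text{ prime},\,q\mid\mathrm{den}(s)}q^{\lfloor n/(q-1)\rfloor}$. *)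

theory Defs
  imports "HOL-Computational_Algebra.Computational_Algebra" Complex_Main
begin

definition is_number_field :: "'a::field_char_0 itself \<Rightarrow> bool" where
  "is_number_field _ \<longleftrightarrow>
     (\<exists>B :: 'a list. \<forall>x :: 'a. \<exists>c :: nat \<Rightarrow> rat.
        x = (\<Sum>i<length B. of_rat (c i) * B ! i))"

text \<open>An absolute value representing a non-Archimedean place v of K, lying over
  the prime p, with |p|_v = p^(-c), 0 < c <= 1 (the normalized one has
  c = [K_v:Q_p]/[K:Q]).\<close>
definition nonarch_place_abs :: "('a::field_char_0 \<Rightarrow> real) \<Rightarrow> bool" where
  "nonarch_place_abs absv \<longleftrightarrow>
     (\<forall>x. 0 \<le> absv x) \<and> (\<forall>x. absv x = 0 \<longleftrightarrow> x = 0) \<and>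
     (\<forall>x y. absv (x * y) = absv x * absv y) \<and>
     (\<forall>x y. absv (x + y) \<le> max (absv x) (absv y)) \<and>
     (\<exists>(p::nat) (c::real). prime p \<and> 0 < c \<and> c \<le> 1 \<and>
        absv (of_nat p) = real p powr (- c))"

text \<open>Q_k = a^k * (d/dz + b/a)^k (a^n z^l), computed by the recurrence
  Q_(k+1) = a Q_k' + (b - k a') Q_k, Q_0 = a^n z^l.\<close>
fun Qop :: "'a::field_char_0 poly \<Rightarrow> 'a poly \<Rightarrow> 'a poly \<Rightarrow> nat \<Rightarrow> 'a poly" where
  "Qop a b F 0 = F"
| "Qop a b F (Suc k) =
     a * pderiv (Qop a b F k) + (b - smult (of_nat k) (pderiv a)) * Qop a b F k"

text \<open>P_{n,l}(z) = (1/n!) (d/dz + b/a)^n (a^n z^l).\<close>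
definition Ppoly :: "'a::field_char_0 poly \<Rightarrow> 'a poly \<Rightarrow> nat \<Rightarrow> nat \<Rightarrow> 'a poly" where
  "Ppoly a b n l = smult (1 / of_nat (fact n)) (Qop a b (a ^ n * monom 1 l) n div a ^ n)"

definition vnorm :: "('a::zero \<Rightarrow> real) \<Rightarrow> 'a poly \<Rightarrow> real" where
  "vnorm absv R = Max ((\<lambda>k. absv (coeff R k)) ` {0..degree R})"

definition den_rat :: "rat \<Rightarrow> nat" where
  "den_rat s = nat (snd (quotient_of s))"

definition mu :: "nat \<Rightarrow> rat \<Rightarrow> nat" where
  "mu n s = den_rat s ^ n * (\<Prod>q\<in>prime_factors (den_rat s). q ^ (n div (q - 1)))"

definition hv :: "('a \<Rightarrow> real) \<Rightarrow> 'a \<Rightarrow> real" where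
  "hv absv \<alpha> = ln (max 1 (absv \<alpha>))"

end

(*
  Since deg b < m, partial fractions give b/a = sum_i s_i/(z - alpha_i), and the twisted
  derivation d/dz + b/a obeys a Leibniz rule on products. Hence P_{n,l} is the n-th
  coefficient of the product of the divided-power series of d/dz applied to z^l and of
  d/dz + s_i/(z - alpha_i) applied to (z - alpha_i)^n; the latter has the coefficients
  binom(s_i + n, j) (z - alpha_i)^(n - j). Each mu_n(s_i) binom(s_i + n, j) is an integer:
  primes dividing den(s_i) are controlled by Legendre's bound v_p(j!) <= j/(p - 1), the
  other primes by the divisibility of products of j consecutive terms of an arithmetic
  progression by j!. The ultrametric inequality then bounds every coefficient.
  Only the ultrametric inequality, the distinct roots and deg b < m are needed.
*)
theory Submission
  imports Defs "HOL-Number_Theory.Cong"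
begin

section \<open>Integrality of \<open>\<mu>\<^sub>n(s) binom(s + n, k)\<close>\<close>

lemma multiplicity_fact_rec:
  fixes p k :: nat
  assumes p: "prime p"
  shows "multiplicity p (fact k :: nat) = k div p + multiplicity p (fact (k div p) :: nat)"
proof (induction k)
  case 0
  then show ?case by simp
next
  case (Suc k)
  have p1: "p > 1"
    using p prime_gt_1_nat by blast
  have fact_Suc: "multiplicity p (fact (Suc j) :: nat) = multiplicity p (Suc j) + multiplicity p (fact j :: nat)" for j
  proof -
    have "(fact (Suc j) :: nat) = Suc j * fact j"
      by (simp only: fact_Suc of_nat_id)
    then show ?thesis
      using p by (simp only: prime_elem_multiplicity_mult_distrib prime_imp_prime_elem fact_nonzero Suc_neq_Zero not_False_eq_True)
  qed
  show ?case
  proof (cases "p dvd Suc k")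
    case True
    then obtain q where q: "Suc k = p * q" ..
    then have "q > 0"
      by (cases q) auto
    have "Suc k div p = q"
      using q p1 by simp
    moreover have "k div p = q - 1"
    proof -
      have "k = p * (q - 1) + (p - 1)"
        using q \<open>q > 0\<close> p1 by (cases q) (auto simp: algebra_simps)
      then show ?thesis
        using p1 by (intro div_nat_eqI) (auto simp: algebra_simps)
    qed
    moreover have "multiplicity p (fact q :: nat) = multiplicity p q + multiplicity p (fact (q - 1) :: nat)"
      using fact_Suc[of "q - 1"] \<open>q > 0\<close> by simp
    moreover have "multiplicity p (Suc k) = Suc (multiplicity p q)"
      using p1 \<open>q > 0\<close> q multiplicity_times_same[where p = p and x = q] by simp
    ultimately show ?thesis
      using Suc.IH fact_Suc \<open>q > 0\<close> by simp
  next
    case False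
    then have "Suc k div p = k div p"
      using p1 by (simp add: div_Suc dvd_eq_mod_eq_0)
    moreover have "multiplicity p (Suc k) = 0"
      using False by (simp add: not_dvd_imp_multiplicity_0)
    ultimately show ?thesis
      using Suc.IH fact_Suc by simp
  qed
qed

lemma multiplicity_fact_le:
  fixes p k :: nat
  assumes p: "prime p"
  shows "multiplicity p (fact k :: nat) \<le> k div (p - 1)"
proof -
  have p1: "p > 1"
    using p prime_gt_1_nat by blast
  have "(p - 1) * multiplicity p (fact k :: nat) \<le> k"
  proof (induction k rule: less_induct)
    case (less k)
    show ?case
    proof (cases "k = 0")
      case False
      then have "k div p < k"
        using p1 by simp
      have "(p - 1) * multiplicity p (fact k :: nat)
          = (p - 1) * (k div p) + (p - 1) * multiplicity p (fact (k div p) :: nat)"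
        using multiplicity_fact_rec[OF p, of k] by (simp add: algebra_simps)
      also have "\<dots> \<le> (p - 1) * (k div p) + k div p"
        using less.IH[OF \<open>k div p < k\<close>] by simp
      also have "\<dots> = p * (k div p)"
        using p1 by (simp add: algebra_simps)
      also have "\<dots> \<le> k"
        by simp
      finally show ?thesis .
    qed simp
  qed
  then show ?thesis
    using p1 by (simp add: less_eq_div_iff_mult_less_eq mult.commute)
qed

lemma prime_power_dvd_imp_dvd:
  fixes x y :: "'a::factorial_semiring"
  assumes "x \<noteq> 0" and "\<And>p k. prime p \<Longrightarrow> p ^ k dvd x \<Longrightarrow> p ^ k dvd y"
  shows "x dvd y"
proof (cases "y = 0")
  case False
  show ?thesis
  proof (rule multiplicity_le_imp_dvd[OF \<open>x \<noteq> 0\<close>])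
    fix p :: 'a
    assume "prime p"
    then have "p ^ multiplicity p x dvd y"
      by (intro assms(2) multiplicity_dvd)
    then show "multiplicity p x \<le> multiplicity p y"
      using \<open>prime p\<close> False by (intro multiplicity_geI) auto
  qed
qed simp

lemma dvd_prod_arith_progression:
  fixes c d P :: int
  assumes "coprime d P" and "P dvd fact k"
  shows "P dvd (\<Prod>i<k. c - int i * d)"
proof -
  obtain d' :: int where d': "[d * d' = 1] (mod P)"
    using cong_solve_coprime_int[OF assms(1)] by blast
  define x where "x = c * d'"
  have "[c - int i * d = d * (x - int i)] (mod P)" for i
  proof -
    have "[(d * d') * c - int i * d = 1 * c - int i * d] (mod P)"
      by (intro cong_diff cong_mult d' cong_refl)
    then show ?thesis
      by (simp add: x_def algebra_simps cong_sym)
  qed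
  then have "[(\<Prod>i<k. c - int i * d) = (\<Prod>i<k. d * (x - int i))] (mod P)"
    by (rule cong_prod)
  also have "(\<Prod>i<k. d * (x - int i)) = d ^ k * (\<Prod>i<k. x - int i)"
    by (simp add: prod.distrib)
  finally have "[(\<Prod>i<k. c - int i * d) = d ^ k * (\<Prod>i<k. x - int i)] (mod P)" .
  moreover have "P dvd d ^ k * (\<Prod>i<k. x - int i)"
  proof -
    have "fact k dvd (\<Prod>i<k. x - int i)"
      unfolding lessThan_atLeast0 gbinomial_int_mult_fact'[symmetric] by simp
    then show ?thesis
      using assms(2) by (meson dvd_mult dvd_trans)
  qed
  ultimately show ?thesis
    using cong_dvd_iff by blast
qed

lemma fact_dvd_prime_factors_mult_prod:
  fixes D :: nat and c :: int
  assumes "D > 0" and "k \<le> n"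
  shows "int (fact k) dvd int (\<Prod>q\<in>prime_factors D. q ^ (n div (q - 1))) * (\<Prod>i<k. c - int i * int D)"
    (is "_ dvd int ?R * ?X")
proof (rule prime_power_dvd_imp_dvd)
  fix p :: int and v :: nat
  assume "prime p" and pv: "p ^ v dvd int (fact k)"
  then obtain q :: nat where p_eq: "p = int q"
    using nonneg_int_cases prime_ge_0_int by blast
  then have "prime q"
    using \<open>prime p\<close> by simp
  have qv: "q ^ v dvd fact k"
    using pv unfolding p_eq by (metis int_dvd_int_iff of_nat_fact of_nat_power)
  show "p ^ v dvd int ?R * ?X"
  proof (cases "q dvd D")
    case True
    then have "q \<in> prime_factors D"
      using \<open>prime q\<close> \<open>D > 0\<close> by (simp add: in_prime_factors_iff)
    have "v \<le> multiplicity q (fact k :: nat)"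
      using qv \<open>prime q\<close> by (intro multiplicity_geI) auto
    also have "\<dots> \<le> n div (q - 1)"
      using multiplicity_fact_le[OF \<open>prime q\<close>, of k] div_le_mono[OF \<open>k \<le> n\<close>, of "q - 1"] by linarith
    finally have "q ^ v dvd q ^ (n div (q - 1))"
      by (simp add: le_imp_power_dvd)
    also have "\<dots> dvd ?R"
      using \<open>q \<in> prime_factors D\<close> by (intro dvd_prodI) auto
    finally have "int q ^ v dvd int ?R"
      by (simp only: int_dvd_int_iff flip: of_nat_power)
    then show ?thesis
      unfolding p_eq by (rule dvd_mult2)
  next
    case False
    then have "coprime D (q ^ v)"
      using prime_imp_coprime[OF \<open>prime q\<close> False] by (simp add: coprime_commute)
    then have "coprime (int D) (p ^ v)"
      by (simp add: p_eq flip: of_nat_power)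
    then have "p ^ v dvd ?X"
      using pv by (intro dvd_prod_arith_progression) simp_all
    then show ?thesis
      by simp
  qed
qed simp

lemma mu_pos: "mu n s > 0"
proof -
  have "den_rat s > 0"
    unfolding den_rat_def using quotient_of_denom_pos'[of s] by simp
  moreover have "(\<Prod>q\<in>prime_factors (den_rat s). q ^ (n div (q - 1))) > 0"
    by (intro prod_pos) (auto intro: prime_gt_0_nat)
  ultimately show ?thesis
    unfolding mu_def by simp
qed

lemma mu_mult_gbinomial_in_Ints:
  fixes s :: rat
  assumes "k \<le> n"
  shows "of_nat (mu n s) * ((s + of_nat n) gchoose k) \<in> \<int>"
proof -
  obtain r d where q: "quotient_of s = (r, d)"
    by (cases "quotient_of s") auto
  have "d > 0"
    using quotient_of_denom_pos[OF q] .
  define D where "D = nat d"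
  have d_eq: "d = int D"
    using \<open>d > 0\<close> by (simp add: D_def)
  define R where "R = (\<Prod>q\<in>prime_factors D. q ^ (n div (q - 1)))"
  have mu_eq: "mu n s = D ^ n * R"
    by (simp add: mu_def den_rat_def q D_def R_def)
  define c where "c = r + int n * d"
  define X where "X = (\<Prod>i<k. c - int i * d)"
  have gchoose_eq: "(s + of_nat n) gchoose k = of_int X / (of_int d ^ k * fact k)"
  proof -
    have "s + of_nat n - of_nat i = of_int (c - int i * d) / of_int d" for i
      using \<open>d > 0\<close> by (simp add: quotient_of_div[OF q] c_def field_simps)
    then have "(\<Prod>i<k. s + of_nat n - of_nat i) = of_int X / of_int d ^ k"
      by (simp add: X_def prod_dividef)
    then show ?thesis
      by (simp add: gbinomial_prod_rev lessThan_atLeast0)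
  qed
  have "D > 0"
    using \<open>d > 0\<close> by (simp add: D_def)
  have "int (fact k) dvd int R * X"
    unfolding R_def X_def d_eq using \<open>D > 0\<close> assms by (rule fact_dvd_prime_factors_mult_prod)
  then obtain Y where Y: "int R * X = int (fact k) * Y" ..
  have "(of_nat (mu n s) :: rat) = of_int d ^ (n - k) * of_int d ^ k * of_nat R"
    using assms by (simp add: mu_eq d_eq flip: power_add)
  then have "of_nat (mu n s) * ((s + of_nat n) gchoose k) = of_int d ^ (n - k) * (of_int (int R * X) / fact k)"
    using \<open>d > 0\<close> by (simp add: gchoose_eq)
  also have "\<dots> = of_int (d ^ (n - k) * Y)"
    by (simp add: Y)
  finally show ?thesis
    by simp
qed

section \<open>Ultrametric absolute values\<close>

locale ultrametric_abs =
  fixes absv :: "'a::idom \<Rightarrow> real"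
  assumes absv_nonneg: "0 \<le> absv x"
    and absv_eq_0_iff: "absv x = 0 \<longleftrightarrow> x = 0"
    and absv_mult: "absv (x * y) = absv x * absv y"
    and absv_add_le_max: "absv (x + y) \<le> max (absv x) (absv y)"

lemma ultrametric_abs_if_nonarch_place_abs:
  "nonarch_place_abs absv \<Longrightarrow> ultrametric_abs absv"
  unfolding nonarch_place_abs_def by unfold_locales auto

context ultrametric_abs
begin

lemma absv_0 [simp]: "absv 0 = 0"
  by (simp add: absv_eq_0_iff)

lemma absv_1 [simp]: "absv 1 = 1"
  using absv_mult[of 1 1] absv_eq_0_iff[of 1] by simp

lemma absv_minus [simp]: "absv (- x) = absv x"
proof -
  have "absv (- 1) * absv (- 1) = 1"
    using absv_mult[of "- 1" "- 1"] by simp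
  then have "absv (- 1) = 1"
    using absv_nonneg[of "- 1"] by (simp add: square_eq_1_iff)
  then show ?thesis
    using absv_mult[of "- 1" x] by simp
qed

lemma absv_of_nat_le_1: "absv (of_nat n) \<le> 1"
proof (induction n)
  case (Suc n)
  then show ?case
    using absv_add_le_max[of 1 "of_nat n"] by simp
qed simp

lemma absv_of_int_le_1: "absv (of_int z) \<le> 1"
proof (cases z)
  case (neg n)
  then show ?thesis
    using absv_of_nat_le_1[of "Suc n"] by (simp only: of_int_minus of_int_of_nat_eq absv_minus)
qed (simp add: absv_of_nat_le_1)

lemma absv_sum_le:
  assumes "\<And>i. i \<in> S \<Longrightarrow> absv (f i) \<le> C" and "0 \<le> C"
  shows "absv (sum f S) \<le> C"
  using assms
proof (induction S rule: infinite_finite_induct)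
  case (insert x S)
  then have "absv (f x) \<le> C" and "absv (sum f S) \<le> C"
    by simp_all
  then show ?case
    using absv_add_le_max[of "f x" "sum f S"] insert.hyps by simp
qed simp_all

definition coeffs_le :: "'a poly \<Rightarrow> real \<Rightarrow> bool" where
  "coeffs_le p C \<longleftrightarrow> (\<forall>k. absv (coeff p k) \<le> C)"

lemma coeffs_le_mono: "coeffs_le p C \<Longrightarrow> C \<le> D \<Longrightarrow> coeffs_le p D"
  unfolding coeffs_le_def by (meson order_trans)

lemma coeffs_le_0: "0 \<le> C \<Longrightarrow> coeffs_le 0 C"
  by (simp add: coeffs_le_def)

lemma coeffs_le_1: "coeffs_le 1 1"
  by (simp add: coeffs_le_def coeff_1)

lemma coeffs_le_sum:
  "(\<And>i. i \<in> S \<Longrightarrow> coeffs_le (f i) C) \<Longrightarrow> 0 \<le> C \<Longrightarrow> coeffs_le (sum f S) C"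
  unfolding coeffs_le_def by (auto simp: coeff_sum intro!: absv_sum_le)

lemma coeffs_le_mult:
  assumes "coeffs_le p C" "coeffs_le q D" "0 \<le> C" "0 \<le> D"
  shows "coeffs_le (p * q) (C * D)"
  unfolding coeffs_le_def coeff_mult
proof (intro allI absv_sum_le)
  fix k i
  show "absv (coeff p i * coeff q (k - i)) \<le> C * D"
    using assms unfolding coeffs_le_def absv_mult by (intro mult_mono) (auto simp: absv_nonneg)
qed (use assms in simp)

lemma coeffs_le_smult:
  assumes "coeffs_le p C" "absv c \<le> D"
  shows "coeffs_le (smult c p) (D * C)"
  using assms absv_nonneg[of c] unfolding coeffs_le_def
  by (auto simp: absv_mult intro!: mult_mono absv_nonneg)

lemma coeffs_le_power:
  assumes "coeffs_le p C" "1 \<le> C"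
  shows "coeffs_le (p ^ n) (C ^ n)"
proof (induction n)
  case (Suc n)
  then show ?case
    using coeffs_le_mult[OF assms(1) Suc] assms(2) by simp
qed (simp add: coeffs_le_1)

lemma coeffs_le_linear: "coeffs_le [:- \<alpha>, 1:] (max 1 (absv \<alpha>))"
  unfolding coeffs_le_def by (auto simp: coeff_pCons split: nat.split)

lemma coeffs_le_monom: "coeffs_le (monom c k) (absv c)"
  unfolding coeffs_le_def by (simp add: coeff_monom absv_nonneg)

lemma coeffs_le_fps_mult:
  assumes "\<And>j. j \<le> k \<Longrightarrow> coeffs_le (F $ j) C" "\<And>j. j \<le> k \<Longrightarrow> coeffs_le (G $ j) D"
    and "0 \<le> C" "0 \<le> D"
  shows "coeffs_le ((F * G) $ k) (C * D)"
  unfolding fps_mult_nth using assms by (intro coeffs_le_sum coeffs_le_mult) auto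

lemma coeffs_le_fps_prod:
  assumes "finite I"
    and "\<And>i j. i \<in> I \<Longrightarrow> j \<le> k \<Longrightarrow> coeffs_le (F i $ j) (C i)"
    and "\<And>i. i \<in> I \<Longrightarrow> 0 \<le> C i"
  shows "coeffs_le ((\<Prod>i\<in>I. F i) $ k) (\<Prod>i\<in>I. C i)"
proof -
  have "\<forall>j\<le>k. coeffs_le ((\<Prod>i\<in>I. F i) $ j) (\<Prod>i\<in>I. C i)"
    using assms
  proof (induction I rule: finite_induct)
    case empty
    then show ?case
      by (auto simp: coeffs_le_1 coeffs_le_0)
  next
    case (insert x I)
    then show ?case
      by (auto intro!: coeffs_le_fps_mult prod_nonneg)
  qed
  then show ?thesis
    by simp
qed

lemma vnorm_le: "coeffs_le p C \<Longrightarrow> vnorm absv p \<le> C"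
  unfolding vnorm_def coeffs_le_def by simp

lemma vnorm_nonneg: "0 \<le> vnorm absv p"
proof -
  have "absv (coeff p 0) \<le> vnorm absv p"
    unfolding vnorm_def by (rule Max_ge) auto
  then show ?thesis
    using absv_nonneg[of "coeff p 0"] by linarith
qed

end

section \<open>Partial fractions\<close>

lemma poly_sum_mult_prod_linear:
  fixes \<alpha> :: "'b \<Rightarrow> 'a::comm_ring_1"
  assumes "finite I" and "i \<in> I"
  shows "poly (\<Sum>i'\<in>I. B i' * (\<Prod>j\<in>I - {i'}. [:- \<alpha> j, 1:])) (\<alpha> i)
       = poly (B i) (\<alpha> i) * (\<Prod>j\<in>I - {i}. \<alpha> i - \<alpha> j)"
proof -
  have "poly (B i' * (\<Prod>j\<in>I - {i'}. [:- \<alpha> j, 1:])) (\<alpha> i) = 0" if "i' \<in> I - {i}" for i'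
  proof -
    have "i \<in> I - {i'}"
      using that assms(2) by auto
    then have "(\<Prod>j\<in>I - {i'}. \<alpha> i - \<alpha> j) = 0"
      using assms(1) by (intro prod_zero bexI[of _ i]) auto
    then show ?thesis
      by (simp add: poly_prod)
  qed
  then show ?thesis
    using assms by (simp add: poly_sum sum.remove[of I i] poly_prod)
qed

lemma poly_pderiv_prod_linear:
  fixes \<alpha> :: "'b \<Rightarrow> 'a::idom"
  assumes "finite I" and "i \<in> I"
  shows "poly (pderiv (\<Prod>j\<in>I. [:- \<alpha> j, 1:])) (\<alpha> i) = (\<Prod>j\<in>I - {i}. \<alpha> i - \<alpha> j)"
  using poly_sum_mult_prod_linear[OF assms, of "\<lambda>_. 1" \<alpha>]
  by (simp add: pderiv_prod pderiv_pCons)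

lemma partial_fraction_numerator:
  fixes \<alpha> :: "'b \<Rightarrow> 'a::field" and b :: "'a poly"
  assumes "finite I" and "inj_on \<alpha> I" and "degree b < card I"
  shows "b = (\<Sum>i\<in>I. [:poly b (\<alpha> i) / poly (pderiv (\<Prod>j\<in>I. [:- \<alpha> j, 1:])) (\<alpha> i):]
                       * (\<Prod>j\<in>I - {i}. [:- \<alpha> j, 1:]))"
    (is "b = ?L")
proof (rule poly_eqI_degree)
  fix x
  assume "x \<in> \<alpha> ` I"
  then obtain i where "i \<in> I" and x: "x = \<alpha> i"
    by blast
  have "(\<Prod>j\<in>I - {i}. \<alpha> i - \<alpha> j) \<noteq> 0"
    using assms(1,2) \<open>i \<in> I\<close> by (auto simp: inj_on_def)
  moreover have "poly ?L (\<alpha> i) = poly b (\<alpha> i) / poly (pderiv (\<Prod>j\<in>I. [:- \<alpha> j, 1:])) (\<alpha> i)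
                                  * (\<Prod>j\<in>I - {i}. \<alpha> i - \<alpha> j)"
    using poly_sum_mult_prod_linear[OF assms(1) \<open>i \<in> I\<close>,
        of "\<lambda>i. [:poly b (\<alpha> i) / poly (pderiv (\<Prod>j\<in>I. [:- \<alpha> j, 1:])) (\<alpha> i):]"]
    by simp
  ultimately show "poly b x = poly ?L x"
    using assms(1) \<open>i \<in> I\<close> by (simp add: x poly_pderiv_prod_linear)
next
  show "degree b < card (\<alpha> ` I)"
    using assms by (simp add: card_image)
  have "degree ?L \<le> card I - 1"
  proof (intro degree_sum_le)
    fix i
    assume "i \<in> I"
    have "degree (\<Prod>j\<in>I - {i}. [:- \<alpha> j, 1:]) \<le> card I - 1"
      using degree_prod_sum_le[of "I - {i}" "\<lambda>j. [:- \<alpha> j, 1:]"] assms(1) \<open>i \<in> I\<close> by simp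
    then show "degree ([:poly b (\<alpha> i) / poly (pderiv (\<Prod>j\<in>I. [:- \<alpha> j, 1:])) (\<alpha> i):]
                       * (\<Prod>j\<in>I - {i}. [:- \<alpha> j, 1:])) \<le> card I - 1"
      by (auto intro: order_trans[OF degree_smult_le])
  qed (use assms(1) in simp)
  then show "degree ?L < card (\<alpha> ` I)"
    using assms by (simp add: card_image)
qed

section \<open>Divided powers of twisted derivations\<close>

lemma pderiv_sum: "pderiv (\<Sum>x\<in>A. f x) = (\<Sum>x\<in>A. pderiv (f x))"
  by (induction A rule: infinite_finite_induct) (simp_all add: pderiv_add)

text \<open>\<open>divided_powers A B n T\<close>: \<open>T $ k = (d/dz + B/A)\<^sup>k (T $ 0) / k!\<close> for \<open>k \<le> n\<close>, stated
  without division; as a series in \<open>t\<close> it reads \<open>A \<partial>\<^sub>t T = (A d/dz + B) T\<close> up to order \<open>n\<close>.\<close>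

definition divided_powers :: "'a::idom poly \<Rightarrow> 'a poly \<Rightarrow> nat \<Rightarrow> 'a poly fps \<Rightarrow> bool" where
  "divided_powers A B n T \<longleftrightarrow> (\<forall>k<n. A * fps_deriv T $ k = A * pderiv (T $ k) + B * T $ k)"

text \<open>The Leibniz rule: \<open>B\<^sub>1/A\<^sub>1 + B\<^sub>2/A\<^sub>2 = (B\<^sub>1 A\<^sub>2 + A\<^sub>1 B\<^sub>2)/(A\<^sub>1 A\<^sub>2)\<close>.\<close>

lemma divided_powers_mult:
  assumes F: "divided_powers A1 B1 n F" and G: "divided_powers A2 B2 n G"
  shows "divided_powers (A1 * A2) (B1 * A2 + A1 * B2) n (F * G)"
  unfolding divided_powers_def
proof (intro allI impI)
  fix k
  assume "k < n"
  have "A1 * A2 * fps_deriv (F * G) $ k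
      = (\<Sum>i=0..k. A2 * G $ (k - i) * (A1 * fps_deriv F $ i) + A1 * F $ i * (A2 * fps_deriv G $ (k - i)))"
    unfolding fps_deriv_mult fps_add_nth fps_mult_nth
    by (simp add: sum_distrib_left sum.distrib algebra_simps del: fps_deriv_nth)
  also have "\<dots> = (\<Sum>i=0..k. A2 * G $ (k - i) * (A1 * pderiv (F $ i) + B1 * F $ i)
                             + A1 * F $ i * (A2 * pderiv (G $ (k - i)) + B2 * G $ (k - i)))"
    using F G \<open>k < n\<close> by (intro sum.cong) (auto simp: divided_powers_def simp del: fps_deriv_nth)
  also have "\<dots> = A1 * A2 * pderiv ((F * G) $ k) + (B1 * A2 + A1 * B2) * (F * G) $ k"
    by (simp add: fps_mult_nth pderiv_sum pderiv_mult sum_distrib_left sum.distrib algebra_simps)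
  finally show "A1 * A2 * fps_deriv (F * G) $ k
      = A1 * A2 * pderiv ((F * G) $ k) + (B1 * A2 + A1 * B2) * (F * G) $ k" .
qed

lemma divided_powers_1: "divided_powers 1 0 n 1"
  by (simp add: divided_powers_def)

lemma divided_powers_prod:
  assumes "finite I" and "\<And>i. i \<in> I \<Longrightarrow> divided_powers (A i) (B i) n (F i)"
  shows "divided_powers (\<Prod>i\<in>I. A i) (\<Sum>i\<in>I. B i * (\<Prod>j\<in>I - {i}. A j)) n (\<Prod>i\<in>I. F i)"
  using assms
proof (induction I rule: finite_induct)
  case empty
  then show ?case
    by (simp add: divided_powers_1)
next
  case (insert x I)
  have "(\<Prod>j\<in>insert x I - {i}. A j) = A x * (\<Prod>j\<in>I - {i}. A j)" if "i \<in> I" for i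
  proof -
    have "insert x I - {i} = insert x (I - {i})"
      using insert.hyps that by auto
    then show ?thesis
      using insert.hyps by simp
  qed
  then have "(\<Sum>i\<in>insert x I. B i * (\<Prod>j\<in>insert x I - {i}. A j))
      = B x * (\<Prod>i\<in>I. A i) + A x * (\<Sum>i\<in>I. B i * (\<Prod>j\<in>I - {i}. A j))"
    using insert.hyps by (simp add: sum_distrib_left algebra_simps cong: sum.cong)
  then show ?case
    using divided_powers_mult[of "A x" "B x" n "F x"] insert by simp
qed

text \<open>The divided powers of \<open>d/dz + \<sigma>/(z - \<alpha>)\<close> applied to \<open>(z - \<alpha>)\<^sup>e\<close>.\<close>

definition linear_power_fps :: "'a::field_char_0 \<Rightarrow> 'a \<Rightarrow> nat \<Rightarrow> 'a poly fps" where
  "linear_power_fps \<sigma> \<alpha> e = Abs_fps (\<lambda>j. smult ((\<sigma> + of_nat e) gchoose j) ([:- \<alpha>, 1:] ^ (e - j)))"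

lemma divided_powers_linear_power_fps:
  "divided_powers [:- \<alpha>, 1:] [:\<sigma>:] e (linear_power_fps \<sigma> \<alpha> e)"
  unfolding divided_powers_def
proof (intro allI impI)
  fix k
  assume "k < e"
  define X where "X = [:- \<alpha>, 1:]"
  define g where "g j = (\<sigma> + of_nat e) gchoose j" for j
  define T where "T = linear_power_fps \<sigma> \<alpha> e"
  have T_nth: "T $ j = smult (g j) (X ^ (e - j))" for j
    by (simp add: T_def linear_power_fps_def X_def g_def)
  have X_pow: "X ^ (e - k) = X * X ^ (e - Suc k)"
    using \<open>k < e\<close> by (metis Suc_diff_Suc power_Suc)
  have pderiv_X_pow: "pderiv (X ^ (e - k)) = smult (of_nat (e - k)) (X ^ (e - Suc k))"
    by (simp add: X_def pderiv_power pderiv_pCons)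
  have g_step: "of_nat (Suc k) * g (Suc k) = (\<sigma> + of_nat (e - k)) * g k"
  proof -
    have "of_nat (Suc k) * g (Suc k) = (\<sigma> + of_nat e - of_nat k) * g k"
      unfolding g_def by (simp only: gbinomial_absorb_comp gbinomial_absorption)
    then show ?thesis
      using \<open>k < e\<close> by (simp add: of_nat_diff)
  qed
  have "X * fps_deriv T $ k = smult (of_nat (Suc k) * g (Suc k)) (X ^ (e - k))"
    by (simp add: T_nth X_pow of_nat_poly mult_ac del: of_nat_Suc)
  also have "\<dots> = smult ((\<sigma> + of_nat (e - k)) * g k) (X ^ (e - k))"
    by (simp only: g_step)
  also have "\<dots> = X * pderiv (T $ k) + [:\<sigma>:] * T $ k"
    unfolding T_nth pderiv_smult pderiv_X_pow by (simp add: X_pow smult_add_left algebra_simps)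
  finally show "X * fps_deriv T $ k = X * pderiv (T $ k) + [:\<sigma>:] * T $ k" .
qed

text \<open>The divided powers of \<open>d/dz\<close> applied to \<open>z\<^sup>l\<close>.\<close>

definition monom_fps :: "nat \<Rightarrow> 'a::comm_semiring_1 poly fps" where
  "monom_fps l = Abs_fps (\<lambda>j. monom (of_nat (l choose j)) (l - j))"

lemma divided_powers_monom_fps: "divided_powers 1 0 n (monom_fps l)"
  unfolding divided_powers_def
proof (intro allI impI)
  fix k
  have "Suc k * (l choose Suc k) = (l - k) * (l choose k)"
    using binomial_absorb_comp binomial_absorption by presburger
  then show "1 * fps_deriv (monom_fps l) $ k = 1 * pderiv (monom_fps l $ k) + 0 * monom_fps l $ k"
    by (simp add: monom_fps_def pderiv_monom of_nat_poly smult_monom del: of_nat_Suc flip: of_nat_mult)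
qed

lemma Qop_eq_divided_powers:
  assumes T: "divided_powers a b n T" and "k \<le> n"
  shows "Qop a b (T $ 0) k = smult (fact k) (a ^ k * T $ k)"
  using \<open>k \<le> n\<close>
proof (induction k)
  case (Suc k)
  then have IH: "Qop a b (T $ 0) k = smult (fact k) (a ^ k * T $ k)" and "k < n"
    by simp_all
  have a_pderiv_power: "a * (T $ k * pderiv (a ^ k)) = smult (of_nat k) (pderiv a * (T $ k * a ^ k))"
    by (cases k) (simp_all add: pderiv_power_Suc mult_ac del: power_Suc, simp add: mult_ac)
  have "Qop a b (T $ 0) (Suc k)
      = smult (fact k) (a * pderiv (a ^ k * T $ k) + (b - smult (of_nat k) (pderiv a)) * (a ^ k * T $ k))"
    by (simp add: IH pderiv_smult smult_add_right smult_diff_right algebra_simps)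
  also have "a * pderiv (a ^ k * T $ k) + (b - smult (of_nat k) (pderiv a)) * (a ^ k * T $ k)
      = a ^ k * (a * pderiv (T $ k) + b * T $ k)"
    by (simp add: pderiv_mult ring_distribs a_pderiv_power) (simp add: algebra_simps)
  also have "a * pderiv (T $ k) + b * T $ k = of_nat (Suc k) * (a * T $ Suc k)"
    using T \<open>k < n\<close> by (simp add: divided_powers_def algebra_simps)
  finally show ?case
    by (simp add: of_nat_poly algebra_simps del: of_nat_Suc)
qed simp

lemma Ppoly_eq_divided_powers:
  assumes "a \<noteq> 0" and "divided_powers a b n T" and "T $ 0 = a ^ n * monom 1 l"
  shows "Ppoly a b n l = T $ n"
  using Qop_eq_divided_powers[OF assms(2) order_refl] assms(1,3)
  by (simp add: Ppoly_def div_smult_left)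

lemma fps_nth_prod_0: "(\<Prod>i\<in>I. F i) $ 0 = (\<Prod>i\<in>I. F i $ 0)"
  by (induction I rule: infinite_finite_induct) auto

lemma Ppoly_eq_nth_fps_prod:
  fixes \<alpha> :: "'b \<Rightarrow> 'a::field_char_0"
  assumes "finite I" and "inj_on \<alpha> I" and "degree b < card I"
    and a: "a = (\<Prod>i\<in>I. [:- \<alpha> i, 1:])"
  shows "Ppoly a b n l
       = (monom_fps l * (\<Prod>i\<in>I. linear_power_fps (poly b (\<alpha> i) / poly (pderiv a) (\<alpha> i)) (\<alpha> i) n)) $ n"
proof -
  define \<sigma> where "\<sigma> i = poly b (\<alpha> i) / poly (pderiv a) (\<alpha> i)" for i
  define T where "T = monom_fps l * (\<Prod>i\<in>I. linear_power_fps (\<sigma> i) (\<alpha> i) n)"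
  have b: "b = (\<Sum>i\<in>I. [:\<sigma> i:] * (\<Prod>j\<in>I - {i}. [:- \<alpha> j, 1:]))"
    unfolding \<sigma>_def a by (rule partial_fraction_numerator[OF assms(1-3)])
  have "divided_powers a b n T"
    using divided_powers_mult[OF divided_powers_monom_fps
        divided_powers_prod[OF \<open>finite I\<close> divided_powers_linear_power_fps]]
    by (simp add: T_def a b)
  moreover have "T $ 0 = a ^ n * monom 1 l"
    by (simp add: T_def monom_fps_def linear_power_fps_def fps_nth_prod_0 a prod_power_distrib mult.commute)
  moreover have "a \<noteq> 0"
    using \<open>finite I\<close> by (simp add: a)
  ultimately show ?thesis
    using Ppoly_eq_divided_powers unfolding T_def \<sigma>_def by blast
qed

section \<open>Coefficient bounds\<close>

lemma of_rat_gbinomial: "of_rat (x gchoose k) = (of_rat x :: 'a::field_char_0) gchoose k"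
proof -
  have "of_rat (fact k) = (fact k :: 'a)"
    by (metis of_nat_fact of_rat_of_nat_eq)
  then show ?thesis
    by (simp add: gbinomial_prod_rev of_rat_divide of_rat_prod of_rat_diff)
qed

definition root_factor :: "('a::field_char_0 \<Rightarrow> real) \<Rightarrow> nat \<Rightarrow> rat \<Rightarrow> 'a \<Rightarrow> real" where
  "root_factor absv n s \<alpha> = max 1 (absv \<alpha>) ^ n / absv (of_nat (mu n s))"

context
  fixes absv :: "'a::field_char_0 \<Rightarrow> real"
  assumes absv: "ultrametric_abs absv"
begin

interpretation ultrametric_abs absv
  by (fact absv)

lemma absv_mu_pos: "0 < absv (of_nat (mu n s))"
proof -
  have "absv (of_nat (mu n s)) \<noteq> 0"
    using mu_pos[of n s] by (simp add: absv_eq_0_iff)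
  then show ?thesis
    using absv_nonneg[of "of_nat (mu n s)"] by linarith
qed

lemma absv_gbinomial_le:
  assumes "k \<le> n"
  shows "absv ((of_rat s + of_nat n) gchoose k) \<le> 1 / absv (of_nat (mu n s))"
proof -
  obtain N where "of_nat (mu n s) * ((s + of_nat n) gchoose k) = of_int N"
    using mu_mult_gbinomial_in_Ints[OF \<open>k \<le> n\<close>] by (metis Ints_cases)
  then have "of_rat (of_nat (mu n s) * ((s + of_nat n) gchoose k)) = (of_int N :: 'a)"
    by simp
  then have "of_nat (mu n s) * ((of_rat s + of_nat n) gchoose k) = (of_int N :: 'a)"
    by (simp add: of_rat_mult of_rat_add of_rat_gbinomial)
  then have "absv (of_nat (mu n s)) * absv ((of_rat s + of_nat n) gchoose k) \<le> 1"
    using absv_of_int_le_1[of N] by (simp flip: absv_mult)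
  then show ?thesis
    using absv_mu_pos by (simp add: field_simps)
qed

lemma one_le_root_factor: "1 \<le> root_factor absv n s \<alpha>"
proof -
  have "1 \<le> max 1 (absv \<alpha>) ^ n"
    by (simp add: one_le_power)
  then have "absv (of_nat (mu n s)) \<le> max 1 (absv \<alpha>) ^ n"
    using absv_of_nat_le_1[of "mu n s"] by linarith
  then show ?thesis
    using absv_mu_pos[of n s] by (simp add: root_factor_def le_divide_eq)
qed

lemma ln_root_factor:
  "ln (root_factor absv n s \<alpha>) = - ln (absv (of_nat (mu n s))) + real n * hv absv \<alpha>"
proof -
  have "absv (of_nat (mu n s)) \<noteq> 0" and "max 1 (absv \<alpha>) \<noteq> 0"
    using absv_mu_pos[of n s] by auto
  then show ?thesis
    by (simp add: root_factor_def ln_div ln_realpow hv_def)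
qed

lemma coeffs_le_linear_power_fps:
  assumes "j \<le> n"
  shows "coeffs_le (linear_power_fps (of_rat s) \<alpha> n $ j) (root_factor absv n s \<alpha>)"
proof -
  have "coeffs_le (linear_power_fps (of_rat s) \<alpha> n $ j)
          (1 / absv (of_nat (mu n s)) * max 1 (absv \<alpha>) ^ (n - j))"
    unfolding linear_power_fps_def fps_nth_Abs_fps
    using coeffs_le_power[OF coeffs_le_linear] absv_gbinomial_le[OF \<open>j \<le> n\<close>]
    by (intro coeffs_le_smult) simp_all
  moreover have "max 1 (absv \<alpha>) ^ (n - j) \<le> max 1 (absv \<alpha>) ^ n"
    by (rule power_increasing) simp_all
  ultimately show ?thesis
    using absv_mu_pos[of n s]
    by (simp add: root_factor_def coeffs_le_mono divide_right_mono)
qed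

lemma coeffs_le_nth_fps_prod_linear_power:
  assumes "finite I"
  shows "coeffs_le ((monom_fps l * (\<Prod>i\<in>I. linear_power_fps (of_rat (s i)) (\<alpha> i) n)) $ n)
                   (\<Prod>i\<in>I. root_factor absv n (s i) (\<alpha> i))"
proof -
  have "coeffs_le (monom_fps l $ j) 1" for j
    using coeffs_le_mono[OF coeffs_le_monom absv_of_nat_le_1] by (simp add: monom_fps_def)
  then have "coeffs_le ((monom_fps l * (\<Prod>i\<in>I. linear_power_fps (of_rat (s i)) (\<alpha> i) n)) $ n)
                 (1 * (\<Prod>i\<in>I. root_factor absv n (s i) (\<alpha> i)))"
    using assms one_le_root_factor
    by (intro coeffs_le_fps_mult coeffs_le_fps_prod prod_nonneg coeffs_le_linear_power_fps)
       (auto intro: order_trans[OF zero_le_one])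
  then show ?thesis
    by simp
qed

end

theorem lemma4p7:
  fixes a b :: "'a::field_char_0 poly"
    and \<alpha> :: "nat \<Rightarrow> 'a" and s :: "nat \<Rightarrow> rat"
    and absv :: "'a \<Rightarrow> real" and m n :: nat
  assumes K: "is_number_field TYPE('a)"
    and m: "m \<ge> 2"
    and a_monic: "lead_coeff a = 1" and a_deg: "degree a = m"
    and b_deg: "degree b \<le> m - 1"
    and a_prod: "a = (\<Prod>i<m. [:- \<alpha> i, 1:])"
    and \<alpha>_dist: "inj_on \<alpha> {..<m}"
    and s_def: "\<And>i. i < m \<Longrightarrow> of_rat (s i) = poly b (\<alpha> i) / poly (pderiv a) (\<alpha> i)"
    and s_notint: "\<And>i (k::int). i < m \<Longrightarrow> k \<le> -1 \<Longrightarrow> s i \<noteq> of_int k"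
    and bm1: "\<And>k::int. k < -1 \<Longrightarrow> coeff b (m - 1) \<noteq> of_int k"
    and v: "nonarch_place_abs absv"
    and n: "n > 0"
  shows "ln (Max ((\<lambda>l. vnorm absv (Ppoly a b n l)) ` {0..m}))
           \<le> (\<Sum>i<m. - ln (absv (of_nat (mu n (s i)))) + real n * hv absv (\<alpha> i))"
proof -
  have absv: "ultrametric_abs absv"
    using v by (rule ultrametric_abs_if_nonarch_place_abs)
  interpret ultrametric_abs absv
    by (fact absv)
  define C where "C = (\<Prod>i<m. root_factor absv n (s i) (\<alpha> i))"
  define M where "M = Max ((\<lambda>l. vnorm absv (Ppoly a b n l)) ` {0..m})"
  have "vnorm absv (Ppoly a b n l) \<le> C" for l
  proof -
    have "Ppoly a b n l = (monom_fps l * (\<Prod>i<m. linear_power_fps (of_rat (s i)) (\<alpha> i) n)) $ n"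
      using Ppoly_eq_nth_fps_prod[OF finite_lessThan \<alpha>_dist _ a_prod] b_deg m s_def by simp
    then show ?thesis
      using coeffs_le_nth_fps_prod_linear_power[OF absv finite_lessThan] by (simp add: vnorm_le C_def)
  qed
  then have "M \<le> C"
    by (simp add: M_def)
  moreover have "0 \<le> M"
    unfolding M_def by (auto simp: Max_ge_iff intro!: bexI[of _ 0] vnorm_nonneg)
  moreover have "1 \<le> C"
    unfolding C_def using one_le_root_factor[OF absv] by (simp add: prod_ge_1)
  \<comment> \<open>\<open>ln 0 = 0\<close>, so \<open>M = 0\<close> is covered by \<open>1 \<le> C\<close>\<close>
  ultimately have "ln M \<le> ln C"
    by (cases "M = 0") auto
  also have "ln C = (\<Sum>i<m. ln (root_factor absv n (s i) (\<alpha> i)))"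
    unfolding C_def using one_le_root_factor[OF absv]
    by (intro ln_prod finite_lessThan) (metis not_one_le_zero)
  finally show ?thesis
    by (simp add: M_def ln_root_factor[OF absv])
qed

end
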